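(* Let $|p|<1$, $|P|<1$, let $n\ge0$ be an integer, and let $a,b,c,q,r,s,t$ and $A,B,C,Q,R,S,T$ be nonzero complex numbers such that all expressions below are well defined. For a tuple $\pi=(a,b,c;q,r,s,t;p)$ define, for integers $k\ge 0$, \begin{align*} \mu_k(\pi)&=\frac{\theta\big(a(rst/q)^k,\,br^kq^{-k},\,cs^kq^{-k},\,at^k/(bcq^k);p\big)}{\theta(a,b,c,a/(bc);p)}\cdot\frac{(a;rst/q^2,p)_k(b;r,p)_k(c;s,p)_k(a/(bc);t,p)_k}{(q;q,p)_k(ast/(bq);st/q,p)_k(art/(cq);rt/q,p)_k(bcrs/q;rs/q,p)_k},\\ \Psi_n(\pi)&=\frac{(arst/q^2;rst/q^2,p)_n(br;r,p)_n(cs;s,p)_n(at/(bc);t,p)_n}{(q;q,p)_n(ast/(bq);st/q,p)_n(art/(cq);rt/q,p)_n(bcrs/q;rs/q,p)_n},\\ \rho_{n,k}(\pi)&=\frac{(q^{-n};q,p)_k\,(b(q/st)^n/a;st/q,p)_k\,(c(q/rt)^n/a;rt/q,p)_k\,((q/rs)^n/(bc);rs/q,p)_k}{((q^2/rst)^n/a;rst/q^2,p)_k\,(r^{-n}/b;r,p)_k\,(s^{-n}/c;s,p)_k\,(bc/(at^n);t,p)_k}. \end{align*} With $\pi=(a,b,c;q,r,s,t;p)$ and $\Pi=(A,B,C;Q,R,S,T;P)$, $$\sum_{k=0}^n\mu_k(\pi)\,\rho_{n,k}(\Pi)\,q^k=\frac{\Psi_n(\pi)}{\Psi_n(\Pi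)}\sum_{k=0}^n\mu_k(\Pi)\,\rho_{n,k}(\pi)\,Q^k.$$
   Context: For $|p|<1$ and $x\neq 0$, $\theta(x;p)=(x;p)_\infty(p/x;p)_\infty$ where $(x;p)_\infty=\prod_{k\ge 0}(1-xp^k)$, and $\theta(x_1,\dots,x_m;p)=\prod_{i=1}^m\theta(x_i;p)$. For $a\ne0$ and integer $k\ge0$, $(a;q,p)_k=\prod_{j=0}^{k-1}\theta(aq^j;p)$ (empty product $=1$). In $\mu_k(\Pi),\Psi_n(\Pi),\rho_{n,k}(\Pi)$ every lowercase letter is replaced by the corresponding uppercase letter (including $p\mapsto P$, $q\mapsto Q$). Notation such as $(q/st)^n$ means $(q/(st))^n$. *)

theory Defs
  imports "HOL-Analysis.Analysis"
begin

definition qpinf :: "complex \<Rightarrow> complex \<Rightarrow> complex" where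
  "qpinf x p = (\<Prod>k. 1 - x * p ^ k)"

definition theta :: "complex \<Rightarrow> complex \<Rightarrow> complex" where
  "theta x p = qpinf x p * qpinf (p / x) p"

definition ellpoch :: "complex \<Rightarrow> complex \<Rightarrow> complex \<Rightarrow> nat \<Rightarrow> complex" where
  "ellpoch a q p k = (\<Prod>j<k. theta (a * q ^ j) p)"

definition mu_num :: "complex \<Rightarrow> complex \<Rightarrow> complex \<Rightarrow> complex \<Rightarrow> complex \<Rightarrow> complex \<Rightarrow> complex \<Rightarrow> complex \<Rightarrow> nat \<Rightarrow> complex" where
  "mu_num a b c q r s t p k =
     theta (a * (r * s * t/q) ^ k) p * theta (b * r ^ k / q ^ k) p * theta (c * s ^ k / q ^ k) p
     * theta (a * t ^ k / (b * c * q ^ k)) p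
     * ellpoch a (r * s * t/q^2) p k * ellpoch b r p k * ellpoch c s p k * ellpoch (a/(b * c)) t p k"

definition mu_den :: "complex \<Rightarrow> complex \<Rightarrow> complex \<Rightarrow> complex \<Rightarrow> complex \<Rightarrow> complex \<Rightarrow> complex \<Rightarrow> complex \<Rightarrow> nat \<Rightarrow> complex" where
  "mu_den a b c q r s t p k =
     theta a p * theta b p * theta c p * theta (a/(b * c)) p
     * ellpoch q q p k * ellpoch (a * s * t/(b * q)) (s * t/q) p k * ellpoch (a * r * t/(c * q)) (r * t/q) p k
     * ellpoch (b * c * r * s/q) (r * s/q) p k"

definition mu :: "complex \<Rightarrow> complex \<Rightarrow> complex \<Rightarrow> complex \<Rightarrow> complex \<Rightarrow> complex \<Rightarrow> complex \<Rightarrow> complex \<Rightarrow> nat \<Rightarrow> complex" where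
  "mu a b c q r s t p k = mu_num a b c q r s t p k / mu_den a b c q r s t p k"

definition Psi_num :: "complex \<Rightarrow> complex \<Rightarrow> complex \<Rightarrow> complex \<Rightarrow> complex \<Rightarrow> complex \<Rightarrow> complex \<Rightarrow> complex \<Rightarrow> nat \<Rightarrow> complex" where
  "Psi_num a b c q r s t p n =
     ellpoch (a * r * s * t/q^2) (r * s * t/q^2) p n * ellpoch (b * r) r p n * ellpoch (c * s) s p n
     * ellpoch (a * t/(b * c)) t p n"

definition Psi_den :: "complex \<Rightarrow> complex \<Rightarrow> complex \<Rightarrow> complex \<Rightarrow> complex \<Rightarrow> complex \<Rightarrow> complex \<Rightarrow> complex \<Rightarrow> nat \<Rightarrow> complex" where
  "Psi_den a b c q r s t p n =
     ellpoch q q p n * ellpoch (a * s * t/(b * q)) (s * t/q) p n * ellpoch (a * r * t/(c * q)) (r * t/q) p n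
     * ellpoch (b * c * r * s/q) (r * s/q) p n"

definition Psi :: "complex \<Rightarrow> complex \<Rightarrow> complex \<Rightarrow> complex \<Rightarrow> complex \<Rightarrow> complex \<Rightarrow> complex \<Rightarrow> complex \<Rightarrow> nat \<Rightarrow> complex" where
  "Psi a b c q r s t p n = Psi_num a b c q r s t p n / Psi_den a b c q r s t p n"

definition rho_num :: "complex \<Rightarrow> complex \<Rightarrow> complex \<Rightarrow> complex \<Rightarrow> complex \<Rightarrow> complex \<Rightarrow> complex \<Rightarrow> complex \<Rightarrow> nat \<Rightarrow> nat \<Rightarrow> complex" where
  "rho_num a b c q r s t p n k =
     ellpoch (1 / q ^ n) q p k * ellpoch (b * (q/(s * t)) ^ n / a) (s * t/q) p k
     * ellpoch (c * (q/(r * t)) ^ n / a) (r * t/q) p k * ellpoch ((q/(r * s)) ^ n / (b * c)) (r * s/q) p k"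

definition rho_den :: "complex \<Rightarrow> complex \<Rightarrow> complex \<Rightarrow> complex \<Rightarrow> complex \<Rightarrow> complex \<Rightarrow> complex \<Rightarrow> complex \<Rightarrow> nat \<Rightarrow> nat \<Rightarrow> complex" where
  "rho_den a b c q r s t p n k =
     ellpoch ((q^2/(r * s * t)) ^ n / a) (r * s * t/q^2) p k * ellpoch (1 / (r ^ n * b)) r p k
     * ellpoch (1 / (s ^ n * c)) s p k * ellpoch (b * c/(a * t ^ n)) t p k"

definition rho :: "complex \<Rightarrow> complex \<Rightarrow> complex \<Rightarrow> complex \<Rightarrow> complex \<Rightarrow> complex \<Rightarrow> complex \<Rightarrow> complex \<Rightarrow> nat \<Rightarrow> nat \<Rightarrow> complex" where
  "rho a b c q r s t p n k = rho_num a b c q r s t p n k / rho_den a b c q r s t p n k"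

definition well_defined :: "complex \<Rightarrow> complex \<Rightarrow> complex \<Rightarrow> complex \<Rightarrow> complex \<Rightarrow> complex \<Rightarrow> complex \<Rightarrow> complex \<Rightarrow> nat \<Rightarrow> bool" where
  "well_defined a b c q r s t p n \<longleftrightarrow>
     (\<forall>k\<le>n. mu_den a b c q r s t p k \<noteq> 0 \<and> rho_den a b c q r s t p n k \<noteq> 0)
     \<and> Psi_den a b c q r s t p n \<noteq> 0"

end

(* The partial sums of mu_k q^k telescope to Psi: Psi_(j+1) - Psi_j = mu_(j+1) q^(j+1), because
   after cancelling the common elliptic shifted factorials the difference is Weierstrass's
   four-term identity
     theta(xy) theta(x/y) theta(uv) theta(u/v) - theta(xv) theta(x/v) theta(uy) theta(u/y)
       = (u/y) theta(yv) theta(y/v) theta(xu) theta(x/u).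
   Reversing the order of the factors in each elliptic shifted factorial gives
   Psi_n rho_(n,k) = Psi_(n-k).  Hence, with x_k = mu_k(pi) q^k and y_k = mu_k(Pi) Q^k, both sides
   of the identity equal the sum of x_j y_k over j + k <= n, divided by Psi_n(Pi).

   The addition formula is proved analytically.  As functions of x, both sides satisfy
   f(px) = f(x) / x^2, and the left side vanishes at the zeros of theta(xu) theta(x/u), which are
   simple for generic u.  Their quotient is thus holomorphic on C - {0} and invariant under
   x -> px, so it is bounded (its values are attained on the annulus |p| <= |x| <= 1) and constant
   by Liouville's theorem; it vanishes at x = y.  Continuity in u removes the genericity. *)

theory Submission
  imports Defs "HOL-Complex_Analysis.Complex_Analysis"
begin

section \<open>Holomorphic functions with a multiplicative quasi-period\<close>

lemma powi_mult_invariant: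
  fixes p x :: "'a :: field"
  assumes "p \<noteq> 0" and "\<And>z. z \<noteq> 0 \<Longrightarrow> P (p * z) \<longleftrightarrow> P z" and "x \<noteq> 0"
  shows "P (p powi k * x) \<longleftrightarrow> P x"
proof (induction k rule: int_induct[where k = 0])
  case (step1 i)
  have "p powi (i + 1) * x = p * (p powi i * x)"
    using assms(1) by (simp add: power_int_add_1' mult.assoc)
  then show ?case
    using assms step1 by (metis mult_eq_0_iff power_int_eq_0_iff)
next
  case (step2 i)
  have "p powi i * x = p * (p powi (i - 1) * x)"
    using assms(1) power_int_minus_mult[of p i] by (simp add: mult_ac)
  then show ?case
    using assms step2 by (metis mult_eq_0_iff power_int_eq_0_iff)
qed simp

lemma deriv_scaling_at_zero:
  fixes F g :: "complex \<Rightarrow> complex"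
  assumes F: "F holomorphic_on - {0}" and g: "g holomorphic_on - {0}"
    and scaling: "\<And>z. z \<noteq> 0 \<Longrightarrow> F (p * z) = g z * F z"
    and p: "p \<noteq> 0" and x: "x \<noteq> 0" and zero: "F x = 0"
  shows "p * deriv F (p * x) = g x * deriv F x"
proof -
  have dF: "(F has_field_derivative deriv F w) (at w)" if "w \<noteq> 0" for w
    using F that by (intro holomorphic_derivI[of F "- {0}"]) auto
  have dg: "(g has_field_derivative deriv g x) (at x)"
    using g x by (intro holomorphic_derivI[of g "- {0}"]) auto
  have "((\<lambda>z. F (p * z)) has_field_derivative deriv F (p * x) * p) (at x)"
    using p x by (intro DERIV_chain2[OF dF]) (auto intro!: derivative_eq_intros)
  then have "((\<lambda>z. g z * F z) has_field_derivative deriv F (p * x) * p) (at x)"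
    by (rule has_field_derivative_transform_within_open[where S = "- {0}"]) (use scaling x in auto)
  moreover have "((\<lambda>z. g z * F z) has_field_derivative deriv g x * F x + g x * deriv F x) (at x)"
    using dg dF[OF x] by (auto intro!: derivative_eq_intros)
  ultimately show ?thesis
    using zero DERIV_unique by (simp add: mult.commute)
qed

lemma powi_mult_in_annulusE:
  fixes p z :: complex
  assumes p: "norm p < 1" "p \<noteq> 0" and z: "z \<noteq> 0"
  obtains k :: int where "norm p \<le> norm (p powi k * z)" "norm (p powi k * z) \<le> 1"
proof -
  define l where "l = ln (norm p)"
  define m where "m = \<lfloor>ln (norm z) / l\<rfloor>"
  have l: "l < 0"
    using p by (simp add: l_def ln_less_zero_iff)
  have "of_int m \<le> ln (norm z) / l" "ln (norm z) / l < of_int m + 1"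
    unfolding m_def by linarith+
  then have "real_of_int m * l \<ge> ln (norm z)" "(real_of_int m + 1) * l < ln (norm z)"
    using l by (simp_all add: field_simps)
  then have bounds: "l \<le> ln (norm z) - m * l" "ln (norm z) - m * l \<le> 0"
    by (simp_all add: algebra_simps)
  have "norm (p powi (- m) * z) = exp l powi (- m) * exp (ln (norm z))"
    using p z by (simp add: l_def norm_mult norm_power_int)
  also have "\<dots> = exp (ln (norm z) - m * l)"
    by (simp add: exp_power_int exp_diff exp_minus field_simps)
  finally have "norm (p powi (- m) * z) = exp (ln (norm z) - m * l)" .
  moreover have "exp l = norm p"
    using p(2) by (simp add: l_def)
  ultimately show ?thesis
    using bounds by (intro that[of "- m"]) (metis exp_le_cancel_iff, simp)
qed

lemma holomorphic_mult_periodic_imp_const: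
  fixes G :: "complex \<Rightarrow> complex"
  assumes p: "norm p < 1" "p \<noteq> 0" and G: "G holomorphic_on - {0}"
    and periodic: "\<And>z. z \<noteq> 0 \<Longrightarrow> G (p * z) = G z" and x: "x \<noteq> 0" and y: "y \<noteq> 0"
  shows "G x = G y"
proof -
  define A :: "complex set" where "A = cball 0 1 - ball 0 (norm p)"
  have "A \<subseteq> - {0}"
    using p(2) by (auto simp: A_def)
  moreover have "compact A"
    unfolding A_def by (intro compact_diff) auto
  ultimately have "bounded (G ` A)"
    by (intro compact_imp_bounded compact_continuous_image holomorphic_on_imp_continuous_on
        holomorphic_on_subset[OF G])
  moreover have "G z \<in> G ` A" if z: "z \<noteq> 0" for z
  proof -
    obtain k where "p powi k * z \<in> A"
      using powi_mult_in_annulusE[OF p z] by (auto simp: A_def not_less)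
    moreover have "G (p powi k * z) = G z"
      using powi_mult_invariant[where P = "\<lambda>w. G w = G z", OF p(2) _ z] periodic by simp
    ultimately show ?thesis
      by (metis image_eqI)
  qed
  ultimately have "bounded (range (G \<circ> exp))"
    by (auto intro: bounded_subset)
  moreover have "(G \<circ> exp) holomorphic_on UNIV"
    by (intro holomorphic_on_compose holomorphic_on_subset[OF G] holomorphic_intros) auto
  ultimately have "(G \<circ> exp) constant_on UNIV"
    by (intro Liouville_theorem)
  then have "G (exp (Ln x)) = G (exp (Ln y))"
    unfolding constant_on_def by (metis UNIV_I comp_apply)
  then show ?thesis
    using x y by simp
qed

lemma holomorphic_on_ball_quotientE:
  assumes S: "open S" and z0: "z0 \<in> S" and F: "F holomorphic_on S" and H: "H holomorphic_on S"
    and "H z0 \<noteq> 0" and eq: "\<And>w. w \<in> S \<Longrightarrow> H w \<noteq> 0 \<Longrightarrow> g w = F w / H w"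
  obtains e where "e > 0" "g holomorphic_on ball z0 e"
proof -
  obtain e1 where "e1 > 0" "\<And>w. dist z0 w < e1 \<Longrightarrow> H w \<noteq> 0"
    using continuous_on_open_avoid[OF holomorphic_on_imp_continuous_on[OF H] S z0 \<open>H z0 \<noteq> 0\<close>]
    by blast
  moreover obtain e2 where "e2 > 0" "ball z0 e2 \<subseteq> S"
    using S z0 openE by blast
  ultimately have e: "min e1 e2 > 0" "ball z0 (min e1 e2) \<subseteq> S"
    "\<And>w. w \<in> ball z0 (min e1 e2) \<Longrightarrow> H w \<noteq> 0"
    by auto
  have "(\<lambda>w. F w / H w) holomorphic_on ball z0 (min e1 e2)"
    using e by (intro holomorphic_intros holomorphic_on_subset[OF F] holomorphic_on_subset[OF H])
  moreover have "F w / H w = g w" if "w \<in> ball z0 (min e1 e2)" for w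
    using e(2,3) eq that by (metis subsetD)
  ultimately have "g holomorphic_on ball z0 (min e1 e2)"
    by (rule holomorphic_transform)
  with e(1) show ?thesis
    by (rule that)
qed

lemma holomorphic_on_quotient_removable:
  fixes f h :: "complex \<Rightarrow> complex"
  assumes S: "open S" and f: "f holomorphic_on S" and h: "h holomorphic_on S"
    and zeros: "\<And>z. z \<in> S \<Longrightarrow> h z = 0 \<Longrightarrow> f z = 0 \<and> deriv h z \<noteq> 0"
  shows "(\<lambda>z. if h z = 0 then deriv f z / deriv h z else f z / h z) holomorphic_on S"
proof -
  let ?g = "\<lambda>z. if h z = 0 then deriv f z / deriv h z else f z / h z"
  have "?g analytic_on S"
    unfolding analytic_on_def
  proof
    fix z0 assume z0: "z0 \<in> S"
    show "\<exists>e>0. ?g holomorphic_on ball z0 e"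
    proof (cases "h z0 = 0")
      case False
      then obtain e where "e > 0" "?g holomorphic_on ball z0 e"
        by (rule holomorphic_on_ball_quotientE[where g = ?g, OF S z0 f h]) auto
      then show ?thesis
        by blast
    next
      case True
      define F where "F z = (if z = z0 then deriv f z0 else (f z - f z0) / (z - z0))" for z
      define H where "H z = (if z = z0 then deriv h z0 else (h z - h z0) / (z - z0))" for z
      have "F holomorphic_on S" "H holomorphic_on S"
        unfolding F_def H_def using S f h by (auto intro: pole_lemma_open)
      moreover have "H z0 \<noteq> 0"
        using zeros[OF z0 True] by (simp add: H_def)
      moreover have "?g w = F w / H w" if "H w \<noteq> 0" for w
        using True zeros[OF z0 True] that by (auto simp: F_def H_def)
      ultimately obtain e where "e > 0" "?g holomorphic_on ball z0 e"
        by (rule holomorphic_on_ball_quotientE[where g = ?g, OF S z0])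
      then show ?thesis
        by blast
    qed
  qed
  then show ?thesis
    by (rule analytic_imp_holomorphic)
qed

lemma same_scaling_imp_proportional:
  fixes f h g :: "complex \<Rightarrow> complex"
  assumes p: "norm p < 1" "p \<noteq> 0"
    and f: "f holomorphic_on - {0}" and h: "h holomorphic_on - {0}" and g: "g holomorphic_on - {0}"
    and g_nonzero: "\<And>z. z \<noteq> 0 \<Longrightarrow> g z \<noteq> 0"
    and f_scaling: "\<And>z. z \<noteq> 0 \<Longrightarrow> f (p * z) = g z * f z"
    and h_scaling: "\<And>z. z \<noteq> 0 \<Longrightarrow> h (p * z) = g z * h z"
    and zeros: "\<And>z. z \<noteq> 0 \<Longrightarrow> h z = 0 \<Longrightarrow> f z = 0 \<and> deriv h z \<noteq> 0"
    and x: "x \<noteq> 0" and y: "y \<noteq> 0"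
  shows "f x * h y = f y * h x"
proof -
  define G where "G z = (if h z = 0 then deriv f z / deriv h z else f z / h z)" for z
  have "G holomorphic_on - {0}"
    unfolding G_def using zeros by (intro holomorphic_on_quotient_removable f h) auto
  moreover have "G (p * z) = G z" if z: "z \<noteq> 0" for z
  proof (cases "h z = 0")
    case True
    have "p * deriv f (p * z) = g z * deriv f z" "p * deriv h (p * z) = g z * deriv h z"
      using zeros[OF z True] True by (auto intro!: deriv_scaling_at_zero f g h f_scaling h_scaling p z)
    then have "deriv f (p * z) / deriv h (p * z) = deriv f z / deriv h z"
      using p(2) g_nonzero[OF z] by (metis mult_divide_mult_cancel_left_if nonzero_mult_div_cancel_left)
    then show ?thesis
      using True h_scaling[OF z] by (simp add: G_def)
  next
    case False
    then show ?thesis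
      using g_nonzero[OF z] f_scaling[OF z] h_scaling[OF z] by (simp add: G_def)
  qed
  ultimately have "G x = G y"
    by (intro holomorphic_mult_periodic_imp_const[OF p _ _ x y])
  then show ?thesis
    using zeros[OF x] zeros[OF y] by (auto simp: G_def field_simps split: if_splits)
qed

section \<open>The theta function\<close>

lemma has_prod_qpinf:
  fixes x p :: complex
  assumes "norm p < 1"
  shows "(\<lambda>k. 1 - x * p ^ k) has_prod qpinf x p"
proof -
  have "summable (\<lambda>k. norm x * norm p ^ k)"
    using assms by (intro summable_mult summable_geometric) simp
  then have "abs_convergent_prod (\<lambda>k. 1 - x * p ^ k)"
    by (intro summable_imp_abs_convergent_prod) (simp add: norm_mult norm_power)
  then show ?thesis
    unfolding qpinf_def by (intro convergent_prod_has_prod abs_convergent_prod_imp_convergent_prod)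
qed

lemma qpinf_eq_0_iff:
  assumes "norm p < 1"
  shows "qpinf x p = 0 \<longleftrightarrow> (\<exists>k. x * p ^ k = 1)"
proof -
  have "qpinf x p = 0 \<longleftrightarrow> (\<exists>k. 1 - x * p ^ k = 0)"
    using has_prod_eq_0_iff[OF has_prod_qpinf[OF assms, of x]] by (simp add: image_iff eq_commute[of 0])
  then show ?thesis by simp
qed

lemma qpinf_unfold:
  assumes "norm p < 1"
  shows "qpinf x p = (1 - x) * qpinf (p * x) p"
proof -
  have "(\<lambda>k. 1 - x * p ^ Suc k) has_prod qpinf (p * x) p"
    using has_prod_qpinf[OF assms, of "p * x"] by (simp add: mult_ac)
  then have "(\<lambda>k. 1 - x * p ^ k) has_prod (qpinf (p * x) p * (1 - x))"
    using has_prod_Suc_imp[where f = "\<lambda>k. 1 - x * p ^ k"] by simp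
  then show ?thesis
    using has_prod_unique2[OF has_prod_qpinf[OF assms]] by (simp add: mult.commute)
qed

lemma qpinf_0_right: "qpinf x 0 = 1 - x"
  using qpinf_unfold[of 0 x] by (simp add: qpinf_def)

lemma holomorphic_on_qpinf [holomorphic_intros]:
  assumes p: "norm p < 1" and g: "g holomorphic_on S"
  shows "(\<lambda>z. qpinf (g z) p) holomorphic_on S"
proof -
  have "(\<lambda>x. qpinf x p) holomorphic_on UNIV"
  proof (rule holomorphic_uniform_sequence[where f = "\<lambda>N x. \<Prod>k<N. 1 - x * p ^ k"])
    fix z :: complex
    have "uniformly_convergent_on (cball z 1) (\<lambda>N x. \<Prod>k<N. 1 - x * p ^ k)"
    proof (rule uniformly_convergent_on_prod')
      show "uniformly_convergent_on (cball z 1) (\<lambda>N x. \<Sum>k<N. norm (1 - x * p ^ k - 1))"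
      proof (rule Weierstrass_m_test')
        fix k x assume "x \<in> cball z 1"
        then have "norm x \<le> norm z + 1"
          using norm_triangle_ineq2[of x z] by (auto simp: dist_norm norm_minus_commute)
        then show "norm (norm (1 - x * p ^ k - 1)) \<le> (norm z + 1) * norm p ^ k"
          by (simp add: norm_mult norm_power mult_right_mono)
      qed (use p in \<open>intro summable_mult summable_geometric, simp\<close>)
    qed (auto intro!: continuous_intros)
    then have "uniform_limit (cball z 1) (\<lambda>N x. \<Prod>k<N. 1 - x * p ^ k)
                 (\<lambda>x. lim (\<lambda>N. \<Prod>k<N. 1 - x * p ^ k)) sequentially"
      by (simp add: uniformly_convergent_uniform_limit_iff)
    moreover have "lim (\<lambda>N. \<Prod>k<N. 1 - x * p ^ k) = qpinf x p" for x
      using has_prod_qpinf[OF p, of x] by (intro limI has_prod_imp_tendsto')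
    ultimately have "uniform_limit (cball z 1) (\<lambda>N x. \<Prod>k<N. 1 - x * p ^ k) (\<lambda>x. qpinf x p) sequentially"
      by simp
    then show "\<exists>d>0. cball z d \<subseteq> UNIV \<and>
        uniform_limit (cball z d) (\<lambda>N x. \<Prod>k<N. 1 - x * p ^ k) (\<lambda>x. qpinf x p) sequentially"
      by (intro exI[of _ 1]) simp
  qed (auto intro!: holomorphic_intros)
  then show ?thesis
    using holomorphic_on_compose[OF g, of "\<lambda>x. qpinf x p"] holomorphic_on_subset by (auto simp: o_def)
qed

lemma theta_0_right: "theta x 0 = 1 - x"
  by (simp add: theta_def qpinf_0_right)

lemma theta_1: "norm p < 1 \<Longrightarrow> theta 1 p = 0"
  using qpinf_unfold[of p 1] by (simp add: theta_def)

lemma theta_unfold: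
  assumes "norm p < 1"
  shows "theta x p = (1 - x) * qpinf (p * x) p * qpinf (p / x) p"
  using qpinf_unfold[OF assms, of x] by (simp add: theta_def)

lemma theta_inverse:
  assumes "norm p < 1" "x \<noteq> 0"
  shows "theta (1 / x) p = - theta x p / x"
proof -
  have "theta (1 / x) p = (1 - 1 / x) * qpinf (p / x) p * qpinf (p * x) p"
    using theta_unfold[OF assms(1), of "1 / x"] by simp
  also have "1 - 1 / x = - (1 - x) / x"
    using assms(2) by (simp add: field_simps)
  finally show ?thesis
    using assms(2) by (simp add: theta_unfold[OF assms(1), of x] field_simps)
qed

lemma theta_mult_nome:
  assumes "norm p < 1" "p \<noteq> 0" "x \<noteq> 0"
  shows "theta (p * x) p = - theta x p / x"
proof -
  have "theta (p * x) p = theta (1 / x) p"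
    using assms(2) by (simp add: theta_def mult.commute)
  then show ?thesis
    using theta_inverse[OF assms(1,3)] by simp
qed

lemma holomorphic_on_theta [holomorphic_intros]:
  assumes "norm p < 1" "g holomorphic_on S" "\<And>z. z \<in> S \<Longrightarrow> g z \<noteq> 0"
  shows "(\<lambda>z. theta (g z) p) holomorphic_on S"
  unfolding theta_def using assms by (intro holomorphic_intros) auto

lemma theta_eq_0_iff:
  fixes p x :: complex
  assumes p: "norm p < 1" "p \<noteq> 0" and x: "x \<noteq> 0"
  shows "theta x p = 0 \<longleftrightarrow> (\<exists>k::int. x = p powi k)"
proof
  assume "theta x p = 0"
  then consider k where "x * p ^ k = 1" | k where "p / x * p ^ k = 1"
    using qpinf_eq_0_iff[OF p(1)] by (auto simp: theta_def)
  then show "\<exists>k::int. x = p powi k"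
  proof cases
    case (1 k)
    then have "x = p powi (- int k)"
      using p(2) by (simp add: power_int_minus field_simps)
    then show ?thesis ..
  next
    case (2 k)
    then have "x = p ^ Suc k"
      using x by (simp add: field_simps)
    then have "x = p powi int (Suc k)"
      by (simp only: power_int_of_nat)
    then show ?thesis ..
  qed
next
  assume "\<exists>k::int. x = p powi k"
  then obtain k where "x = p powi k" ..
  moreover have "theta (p powi k * 1) p = 0 \<longleftrightarrow> theta 1 p = 0"
    using p theta_mult_nome by (intro powi_mult_invariant) auto
  ultimately show "theta x p = 0"
    using theta_1[OF p(1)] by simp
qed

lemma deriv_theta_1:
  assumes p: "norm p < 1"
  shows "deriv (\<lambda>z. theta z p) 1 \<noteq> 0"
proof -
  define E where "E z = qpinf (p * z) p * qpinf (p / z) p" for z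
  have "E holomorphic_on - {0}"
    unfolding E_def using p by (intro holomorphic_intros) auto
  then have "(E has_field_derivative deriv E 1) (at 1)"
    by (intro holomorphic_derivI[of E "- {0}"]) auto
  then have "((\<lambda>z. (1 - z) * E z) has_field_derivative - E 1) (at 1)"
    by (auto intro!: derivative_eq_intros)
  moreover have "(\<lambda>z. theta z p) = (\<lambda>z. (1 - z) * E z)"
    using theta_unfold[OF p] by (simp add: E_def mult.assoc)
  ultimately have "deriv (\<lambda>z. theta z p) 1 = - E 1"
    by (simp add: DERIV_imp_deriv)
  moreover have "qpinf p p \<noteq> 0"
  proof
    assume "qpinf p p = 0"
    then obtain k where "p * p ^ k = 1"
      using qpinf_eq_0_iff[OF p] by blast
    moreover have "norm (p * p ^ k) < 1"
      using p by (simp add: power_less_one_iff norm_power flip: power_Suc)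
    ultimately show False
      by simp
  qed
  ultimately show ?thesis
    by (simp add: E_def)
qed

lemma deriv_theta_at_zero:
  fixes p x :: complex
  assumes p: "norm p < 1" "p \<noteq> 0" and x: "x \<noteq> 0" and zero: "theta x p = 0"
  shows "deriv (\<lambda>z. theta z p) x \<noteq> 0"
proof -
  let ?T = "\<lambda>z. theta z p"
  have "?T (p * z) = 0 \<and> deriv ?T (p * z) \<noteq> 0 \<longleftrightarrow> ?T z = 0 \<and> deriv ?T z \<noteq> 0" if z: "z \<noteq> 0" for z
  proof (cases "?T z = 0")
    case True
    have "p * deriv ?T (p * z) = - 1 / z * deriv ?T z"
      using p z True theta_mult_nome[OF p]
      by (intro deriv_scaling_at_zero) (auto intro!: holomorphic_intros)
    then show ?thesis
      using p z True theta_mult_nome[OF p z] by auto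
  qed (use p z theta_mult_nome[OF p z] in auto)
  then have "?T (p powi k * 1) = 0 \<and> deriv ?T (p powi k * 1) \<noteq> 0" for k
    using powi_mult_invariant[where P = "\<lambda>z. ?T z = 0 \<and> deriv ?T z \<noteq> 0" and x = 1, OF p(2)]
      deriv_theta_1[OF p(1)] theta_1[OF p(1)] by simp
  moreover obtain k where "x = p powi k * 1"
    using theta_eq_0_iff[OF p x] zero by auto
  ultimately show ?thesis
    by blast
qed

section \<open>The addition formula\<close>

definition theta_pair :: "complex \<Rightarrow> complex \<Rightarrow> complex \<Rightarrow> complex" where
  "theta_pair p x a = theta (x * a) p * theta (x / a) p"

lemma theta_pair_self: "norm p < 1 \<Longrightarrow> a \<noteq> 0 \<Longrightarrow> theta_pair p a a = 0"
  by (simp add: theta_pair_def theta_1)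

lemma theta_pair_inverse_self: "norm p < 1 \<Longrightarrow> a \<noteq> 0 \<Longrightarrow> theta_pair p (1 / a) a = 0"
  by (simp add: theta_pair_def theta_1)

lemma theta_pair_swap:
  assumes "norm p < 1" "x \<noteq> 0" "a \<noteq> 0"
  shows "theta_pair p a x = - (a / x) * theta_pair p x a"
  using theta_inverse[OF assms(1), of "x / a"] assms by (simp add: theta_pair_def mult.commute)

lemma theta_pair_inverse:
  assumes "norm p < 1" "x \<noteq> 0" "a \<noteq> 0"
  shows "theta_pair p (1 / x) a = theta_pair p x a / x\<^sup>2"
proof -
  have 1: "theta (1 / x * a) p = - theta (x / a) p / (x / a)"
    using theta_inverse[OF assms(1), of "x / a"] assms by simp
  have 2: "theta (1 / x / a) p = - theta (x * a) p / (x * a)"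
    using theta_inverse[OF assms(1), of "x * a"] assms by simp
  show ?thesis
    unfolding theta_pair_def 1 2 using assms by (simp add: field_simps power2_eq_square)
qed

lemma theta_pair_mult_nome:
  assumes "norm p < 1" "p \<noteq> 0" "x \<noteq> 0" "a \<noteq> 0"
  shows "theta_pair p (p * x) a = theta_pair p x a / x\<^sup>2"
proof -
  have 1: "theta (p * x * a) p = - theta (x * a) p / (x * a)"
    using theta_mult_nome[OF assms(1,2), of "x * a"] assms by (simp add: mult.assoc)
  have 2: "theta (p * x / a) p = - theta (x / a) p / (x / a)"
    using theta_mult_nome[OF assms(1,2), of "x / a"] assms by (simp add: mult.assoc times_divide_eq_right)
  show ?thesis
    unfolding theta_pair_def 1 2 using assms by (simp add: field_simps power2_eq_square)
qed

lemma holomorphic_on_theta_pair [holomorphic_intros]: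
  "norm p < 1 \<Longrightarrow> a \<noteq> 0 \<Longrightarrow> (\<lambda>x. theta_pair p x a) holomorphic_on - {0}"
  unfolding theta_pair_def by (intro holomorphic_intros) auto

lemma continuous_on_theta_pair [continuous_intros]:
  "norm p < 1 \<Longrightarrow> x \<noteq> 0 \<Longrightarrow> continuous_on (- {0}) (\<lambda>a. theta_pair p x a)"
  unfolding theta_pair_def
  by (intro holomorphic_on_imp_continuous_on holomorphic_intros) auto

lemma theta_pair_eq_0_iff:
  assumes "norm p < 1" "p \<noteq> 0" "x \<noteq> 0" "a \<noteq> 0"
  shows "theta_pair p x a = 0 \<longleftrightarrow> (\<exists>k. x = p powi k * a \<or> x = p powi k / a)"
  using assms theta_eq_0_iff[OF assms(1,2), of "x * a"] theta_eq_0_iff[OF assms(1,2), of "x / a"]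
  by (auto simp: theta_pair_def field_simps)

lemma deriv_theta_pair_at_zero:
  assumes p: "norm p < 1" "p \<noteq> 0" and a: "a \<noteq> 0" and z: "z \<noteq> 0"
    and simple: "theta (a * a) p \<noteq> 0" and zero: "theta_pair p z a = 0"
  shows "deriv (\<lambda>x. theta_pair p x a) z \<noteq> 0"
proof -
  let ?T = "\<lambda>w. theta w p"
  have dT: "(?T has_field_derivative deriv ?T w) (at w)" if "w \<noteq> 0" for w
    using p(1) that by (intro holomorphic_derivI[of _ "- {0}"] holomorphic_intros) auto
  have "((\<lambda>x. ?T (x * a) * ?T (x / a)) has_field_derivative
      deriv ?T (z * a) * a * ?T (z / a) + deriv ?T (z / a) / a * ?T (z * a)) (at z)"
    using a z by (auto intro!: derivative_eq_intros DERIV_chain2[OF dT] simp: field_simps)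
  then have deriv: "deriv (\<lambda>x. theta_pair p x a) z =
      deriv ?T (z * a) * a * ?T (z / a) + deriv ?T (z / a) / a * ?T (z * a)"
    by (simp add: theta_pair_def DERIV_imp_deriv)
  have "\<not> (?T (z * a) = 0 \<and> ?T (z / a) = 0)"
  proof
    assume "?T (z * a) = 0 \<and> ?T (z / a) = 0"
    then obtain j k where "z * a = p powi j" "z / a = p powi k"
      using theta_eq_0_iff[OF p] a z by (metis divide_eq_0_iff mult_eq_0_iff)
    then have "a * a = p powi (j - k)"
      using a z p(2) by (simp add: power_int_diff field_simps)
    then show False
      using simple theta_eq_0_iff[OF p, of "a * a"] a by (metis mult_eq_0_iff)
  qed
  then show ?thesis
    using zero deriv deriv_theta_at_zero[OF p] a z by (auto simp: theta_pair_def)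
qed

lemma theta_addition_generic:
  fixes p x Y U V :: complex
  assumes p: "norm p < 1" "p \<noteq> 0" and nz: "x \<noteq> 0" "Y \<noteq> 0" "U \<noteq> 0" "V \<noteq> 0"
    and generic: "theta (U * U) p \<noteq> 0" "theta_pair p Y U \<noteq> 0"
  shows "theta_pair p x Y * theta_pair p U V - theta_pair p x V * theta_pair p U Y
       = U / Y * theta_pair p Y V * theta_pair p x U"
proof -
  define f where "f w = theta_pair p w Y * theta_pair p U V - theta_pair p w V * theta_pair p U Y
       - U / Y * theta_pair p Y V * theta_pair p w U" for w
  define h where "h = (\<lambda>x. theta_pair p x U)"
  have scaling: "f (p * z) = 1 / z\<^sup>2 * f z" "h (p * z) = 1 / z\<^sup>2 * h z" if "z \<noteq> 0" for z
    using theta_pair_mult_nome[OF p that] nz by (simp_all add: f_def h_def algebra_simps)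
  have f_zero: "f (p powi k * z) = 0" if "z \<noteq> 0" "f z = 0" for k z
    using scaling(1) p(2) that powi_mult_invariant[where P = "\<lambda>w. f w = 0"] by simp
  have "f U = 0" "f (1 / U) = 0" "f Y = 0"
    using nz p(1) theta_pair_inverse[OF p(1), of U] theta_pair_swap[OF p(1), of U Y]
    by (simp_all add: f_def theta_pair_self theta_pair_inverse_self)
  have zeros: "f z = 0 \<and> deriv h z \<noteq> 0" if z: "z \<noteq> 0" "h z = 0" for z
  proof
    obtain k where "z = p powi k * U \<or> z = p powi k * (1 / U)"
      using z theta_pair_eq_0_iff[OF p z(1) nz(3)] by (auto simp: h_def)
    then show "f z = 0"
      using f_zero[OF _ \<open>f U = 0\<close>] f_zero[OF _ \<open>f (1 / U) = 0\<close>] nz by auto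
    show "deriv h z \<noteq> 0"
      using deriv_theta_pair_at_zero[OF p nz(3) z(1) generic(1)] z by (simp add: h_def)
  qed
  have "f x * h Y = f Y * h x"
  proof (rule same_scaling_imp_proportional[where g = "\<lambda>z. 1 / z\<^sup>2", OF p _ _ _ _ scaling zeros nz(1,2)])
    show "f holomorphic_on - {0}" "h holomorphic_on - {0}"
      unfolding f_def h_def using p(1) nz by (auto intro!: holomorphic_intros)
  qed (auto intro!: holomorphic_intros)
  then show ?thesis
    using \<open>f Y = 0\<close> generic(2) by (simp add: f_def h_def)
qed

lemma countable_theta_addition_nongeneric:
  assumes p: "norm p < 1" "p \<noteq> 0" and Y: "Y \<noteq> 0"
  shows "countable {U. U \<noteq> 0 \<and> (theta (U * U) p = 0 \<or> theta_pair p Y U = 0)}"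
proof (rule countable_subset)
  show "{U. U \<noteq> 0 \<and> (theta (U * U) p = 0 \<or> theta_pair p Y U = 0)}
      \<subseteq> (\<Union>k. {csqrt (p powi k), - csqrt (p powi k), p powi k / Y, Y / p powi k})"
  proof clarify
    fix U assume U: "U \<noteq> 0" "theta (U * U) p = 0 \<or> theta_pair p Y U = 0"
    then obtain k where "U * U = p powi k \<or> Y = p powi k * U \<or> Y = p powi k / U"
      using theta_eq_0_iff[OF p, of "U * U"] theta_pair_eq_0_iff[OF p Y U(1)] by auto
    then have "U * U = csqrt (p powi k) * csqrt (p powi k) \<or> U = Y / p powi k \<or> U = p powi k / Y"
      using U(1) Y p(2) by (auto simp: field_simps simp flip: power2_eq_square)
    then show "U \<in> (\<Union>k. {csqrt (p powi k), - csqrt (p powi k), p powi k / Y, Y / p powi k})"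
      by (auto simp: square_eq_iff)
  qed
qed auto

lemma theta_addition:
  fixes p x Y U V :: complex
  assumes p: "norm p < 1" and nz: "x \<noteq> 0" "Y \<noteq> 0" "U \<noteq> 0" "V \<noteq> 0"
  shows "theta_pair p x Y * theta_pair p U V - theta_pair p x V * theta_pair p U Y
       = U / Y * theta_pair p Y V * theta_pair p x U"
proof (cases "p = 0")
  case True
  then show ?thesis
    using nz by (simp add: theta_pair_def theta_0_right field_simps)
next
  case False
  define F where "F u = theta_pair p x Y * theta_pair p u V - theta_pair p x V * theta_pair p u Y
       - u / Y * theta_pair p Y V * theta_pair p x u" for u
  have "F U = 0"
  proof (rule ccontr)
    assume "F U \<noteq> 0"
    then have U: "U \<in> - {0} \<inter> F -` (- {0})"
      using nz(3) by simp
    have "continuous_on (- {0}) F"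
      unfolding F_def using p nz by (intro continuous_intros holomorphic_on_imp_continuous_on
          holomorphic_on_theta_pair) auto
    then have "open (- {0} \<inter> F -` (- {0}))"
      by (auto intro: continuous_open_preimage)
    then obtain e where "e > 0" and e: "ball U e \<subseteq> - {0} \<inter> F -` (- {0})"
      using U by (rule openE)
    define Bad where "Bad = {u. u \<noteq> 0 \<and> (theta (u * u) p = 0 \<or> theta_pair p Y u = 0)}"
    obtain u where "u \<in> ball U e - Bad"
      using ball_minus_countable_nonempty[OF countable_theta_addition_nongeneric[OF p False nz(2)] \<open>e > 0\<close>]
      unfolding Bad_def by blast
    with e have "u \<noteq> 0" "F u \<noteq> 0" "theta (u * u) p \<noteq> 0" "theta_pair p Y u \<noteq> 0"
      by (auto simp: Bad_def)
    then show False
      using theta_addition_generic[OF p False nz(1,2) _ nz(4)] by (simp add: F_def)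
  qed
  then show ?thesis
    by (simp add: F_def)
qed

lemma theta_addition_shifted:
  fixes p u B C Q :: complex
  assumes p: "norm p < 1" and nz: "u \<noteq> 0" "B \<noteq> 0" "C \<noteq> 0" "Q \<noteq> 0"
  shows "theta (u / Q\<^sup>2) p * theta B p * theta C p * theta (u / (B * C)) p
       - theta Q p * theta (u / (B * Q)) p * theta (u / (C * Q)) p * theta (B * C / Q) p
       = Q * theta (u / Q) p * theta (B / Q) p * theta (C / Q) p * theta (u / (B * C * Q)) p"
proof -
  define X where "X = csqrt (u * B / Q\<^sup>2)"
  have X: "X * X * Q\<^sup>2 = u * B" "X \<noteq> 0"
    using nz by (simp_all add: X_def field_simps flip: power2_eq_square)
  define Y U V where "Y = u / (Q\<^sup>2 * X)" and "U = X * Q / B" and "V = C * B / (X * Q)"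
  have "Y \<noteq> 0" "U \<noteq> 0" "V \<noteq> 0"
    using nz X by (auto simp: Y_def U_def V_def)
  then have "theta_pair p X Y * theta_pair p U V - theta_pair p X V * theta_pair p U Y
      = U / Y * theta_pair p Y V * theta_pair p X U"
    using theta_addition[OF p X(2)] by blast
  moreover have "X * Y = u / Q\<^sup>2" "X / Y = B" "U * V = C" "U / V = u / (B * C)"
    "X * V = B * C / Q" "X / V = u / (C * Q)" "U * Y = u / (B * Q)" "U / Y = Q"
    "Y * V = C / Q" "Y / V = u / (B * C * Q)" "X * U = u / Q" "X / U = B / Q"
    using X nz by (simp_all add: Y_def U_def V_def field_simps power2_eq_square)
  ultimately show ?thesis
    by (simp add: theta_pair_def mult_ac)
qed

section \<open>Elliptic shifted factorials and telescoping\<close>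

lemma ellpoch_0 [simp]: "ellpoch x b p 0 = 1"
  by (simp add: ellpoch_def)

lemma ellpoch_Suc: "ellpoch x b p (Suc k) = ellpoch x b p k * theta (x * b ^ k) p"
  by (simp add: ellpoch_def)

lemma ellpoch_Suc_left: "ellpoch x b p (Suc k) = theta x p * ellpoch (x * b) b p k"
  unfolding ellpoch_def prod.lessThan_Suc_shift by (simp add: mult_ac)

lemma ellpoch_reversal:
  assumes p: "norm p < 1" and nz: "\<alpha> \<noteq> 0" "\<beta> \<noteq> 0" and "k \<le> n"
    and x: "x = \<alpha> * \<beta>" and y: "y = 1 / (\<beta> ^ n * \<alpha>)"
  shows "ellpoch x \<beta> p n = ellpoch x \<beta> p (n - k) * ellpoch y \<beta> p k * (\<Prod>i<k. - (\<alpha> * \<beta> ^ (n - i)))"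
  using \<open>k \<le> n\<close>
proof (induction k)
  case (Suc k)
  define z where "z = \<alpha> * \<beta> ^ (n - k)"
  have "z \<noteq> 0"
    using nz by (simp add: z_def)
  have A: "ellpoch x \<beta> p (n - k) = ellpoch x \<beta> p (n - Suc k) * theta z p"
    using Suc.prems ellpoch_Suc[of x \<beta> p "n - Suc k"]
    by (simp add: x z_def Suc_diff_Suc mult_ac flip: power_Suc)
  have "y * \<beta> ^ k = 1 / z"
    using Suc.prems nz by (simp add: y z_def field_simps flip: power_add)
  then have B: "ellpoch y \<beta> p (Suc k) = ellpoch y \<beta> p k * (- theta z p / z)"
    using theta_inverse[OF p \<open>z \<noteq> 0\<close>] by (simp add: ellpoch_Suc)
  have C: "(\<Prod>i<Suc k. - (\<alpha> * \<beta> ^ (n - i))) = (\<Prod>i<k. - (\<alpha> * \<beta> ^ (n - i))) * - z"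
    by (simp add: z_def)
  have "ellpoch x \<beta> p n
      = ellpoch x \<beta> p (n - Suc k) * theta z p * ellpoch y \<beta> p k * (\<Prod>i<k. - (\<alpha> * \<beta> ^ (n - i)))"
    using Suc A by simp
  also have "\<dots> = ellpoch x \<beta> p (n - Suc k) * ellpoch y \<beta> p (Suc k) * (\<Prod>i<Suc k. - (\<alpha> * \<beta> ^ (n - i)))"
    unfolding B C using \<open>z \<noteq> 0\<close> by (simp add: field_simps)
  finally show ?case .
qed simp

lemma Psi_num_reversal:
  fixes a b c q r s t p :: complex
  assumes p: "norm p < 1" and nz: "a \<noteq> 0" "b \<noteq> 0" "c \<noteq> 0" "q \<noteq> 0" "r \<noteq> 0" "s \<noteq> 0" "t \<noteq> 0"
    and k: "k \<le> n"
  shows "Psi_num a b c q r s t p n = Psi_num a b c q r s t p (n - k) * rho_den a b c q r s t p n k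
           * (\<Prod>i<k. (a * (r * s * t / q) ^ (n - i))\<^sup>2)"
proof -
  have "ellpoch (a * r * s * t / q\<^sup>2) (r * s * t / q\<^sup>2) p n = ellpoch (a * r * s * t / q\<^sup>2) (r * s * t / q\<^sup>2) p (n - k)
      * ellpoch ((q\<^sup>2 / (r * s * t)) ^ n / a) (r * s * t / q\<^sup>2) p k * (\<Prod>i<k. - (a * (r * s * t / q\<^sup>2) ^ (n - i)))"
    using nz by (intro ellpoch_reversal[OF p _ _ k]) (simp_all add: field_simps power_divide)
  moreover have "ellpoch (b * r) r p n = ellpoch (b * r) r p (n - k)
      * ellpoch (1 / (r ^ n * b)) r p k * (\<Prod>i<k. - (b * r ^ (n - i)))"
    using nz by (intro ellpoch_reversal[OF p _ _ k]) simp_all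
  moreover have "ellpoch (c * s) s p n = ellpoch (c * s) s p (n - k)
      * ellpoch (1 / (s ^ n * c)) s p k * (\<Prod>i<k. - (c * s ^ (n - i)))"
    using nz by (intro ellpoch_reversal[OF p _ _ k]) simp_all
  moreover have "ellpoch (a * t / (b * c)) t p n = ellpoch (a * t / (b * c)) t p (n - k)
      * ellpoch (b * c / (a * t ^ n)) t p k * (\<Prod>i<k. - (a / (b * c) * t ^ (n - i)))"
    using nz by (intro ellpoch_reversal[OF p _ _ k]) (simp_all add: field_simps)
  moreover have "(\<Prod>i<k. - (a * (r * s * t / q\<^sup>2) ^ (n - i))) * (\<Prod>i<k. - (b * r ^ (n - i)))
      * (\<Prod>i<k. - (c * s ^ (n - i))) * (\<Prod>i<k. - (a / (b * c) * t ^ (n - i)))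
      = (\<Prod>i<k. (a * (r * s * t / q) ^ (n - i))\<^sup>2)"
    unfolding prod.distrib[symmetric] using nz
    by (intro prod.cong refl) (simp add: field_simps power_mult_distrib power_divide power2_eq_square flip: power_mult)
  ultimately show ?thesis
    unfolding Psi_num_def rho_den_def by (simp add: mult_ac)
qed

lemma Psi_den_reversal:
  fixes a b c q r s t p :: complex
  assumes p: "norm p < 1" and nz: "a \<noteq> 0" "b \<noteq> 0" "c \<noteq> 0" "q \<noteq> 0" "r \<noteq> 0" "s \<noteq> 0" "t \<noteq> 0"
    and k: "k \<le> n"
  shows "Psi_den a b c q r s t p n = Psi_den a b c q r s t p (n - k) * rho_num a b c q r s t p n k
           * (\<Prod>i<k. (a * (r * s * t / q) ^ (n - i))\<^sup>2)"
proof -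
  have "ellpoch q q p n = ellpoch q q p (n - k) * ellpoch (1 / q ^ n) q p k * (\<Prod>i<k. - (1 * q ^ (n - i)))"
    using nz by (intro ellpoch_reversal[OF p _ _ k]) simp_all
  moreover have "ellpoch (a * s * t / (b * q)) (s * t / q) p n = ellpoch (a * s * t / (b * q)) (s * t / q) p (n - k)
      * ellpoch (b * (q / (s * t)) ^ n / a) (s * t / q) p k * (\<Prod>i<k. - (a / b * (s * t / q) ^ (n - i)))"
    using nz by (intro ellpoch_reversal[OF p _ _ k]) (simp_all add: field_simps power_divide)
  moreover have "ellpoch (a * r * t / (c * q)) (r * t / q) p n = ellpoch (a * r * t / (c * q)) (r * t / q) p (n - k)
      * ellpoch (c * (q / (r * t)) ^ n / a) (r * t / q) p k * (\<Prod>i<k. - (a / c * (r * t / q) ^ (n - i)))"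
    using nz by (intro ellpoch_reversal[OF p _ _ k]) (simp_all add: field_simps power_divide)
  moreover have "ellpoch (b * c * r * s / q) (r * s / q) p n = ellpoch (b * c * r * s / q) (r * s / q) p (n - k)
      * ellpoch ((q / (r * s)) ^ n / (b * c)) (r * s / q) p k * (\<Prod>i<k. - (b * c * (r * s / q) ^ (n - i)))"
    using nz by (intro ellpoch_reversal[OF p _ _ k]) (simp_all add: field_simps power_divide)
  moreover have "(\<Prod>i<k. - (1 * q ^ (n - i))) * (\<Prod>i<k. - (a / b * (s * t / q) ^ (n - i)))
      * (\<Prod>i<k. - (a / c * (r * t / q) ^ (n - i))) * (\<Prod>i<k. - (b * c * (r * s / q) ^ (n - i)))
      = (\<Prod>i<k. (a * (r * s * t / q) ^ (n - i))\<^sup>2)"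
    unfolding prod.distrib[symmetric] using nz
    by (intro prod.cong refl) (simp add: field_simps power_mult_distrib power_divide power2_eq_square)
  ultimately show ?thesis
    unfolding Psi_den_def rho_num_def by (simp add: mult_ac)
qed

lemma Psi_mult_rho:
  fixes a b c q r s t p :: complex
  assumes p: "norm p < 1" and nz: "a \<noteq> 0" "b \<noteq> 0" "c \<noteq> 0" "q \<noteq> 0" "r \<noteq> 0" "s \<noteq> 0" "t \<noteq> 0"
    and k: "k \<le> n" and den: "Psi_den a b c q r s t p n \<noteq> 0" "rho_den a b c q r s t p n k \<noteq> 0"
  shows "Psi a b c q r s t p n * rho a b c q r s t p n k = Psi a b c q r s t p (n - k)"
  using nz den Psi_num_reversal[OF p nz k] Psi_den_reversal[OF p nz k]
  by (simp add: Psi_def rho_def)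

lemma Psi_num_nonzero:
  fixes a b c q r s t p :: complex
  assumes p: "norm p < 1" and nz: "a \<noteq> 0" "b \<noteq> 0" "c \<noteq> 0" "q \<noteq> 0" "r \<noteq> 0" "s \<noteq> 0" "t \<noteq> 0"
    and den: "Psi_den a b c q r s t p n \<noteq> 0" "rho_den a b c q r s t p n n \<noteq> 0"
  shows "Psi_num a b c q r s t p n \<noteq> 0"
  using nz den Psi_num_reversal[OF p nz order_refl] Psi_den_reversal[OF p nz order_refl]
  by (simp add: Psi_num_def Psi_den_def)

lemma Psi_nonzero:
  fixes a b c q r s t p :: complex
  assumes p: "norm p < 1" and nz: "a \<noteq> 0" "b \<noteq> 0" "c \<noteq> 0" "q \<noteq> 0" "r \<noteq> 0" "s \<noteq> 0" "t \<noteq> 0"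
    and wd: "well_defined a b c q r s t p n"
  shows "Psi a b c q r s t p n \<noteq> 0"
  using wd Psi_num_nonzero[OF p nz] by (simp add: Psi_def well_defined_def)

lemma theta_addition_telescoping:
  fixes a b c q r s t p :: complex
  assumes p: "norm p < 1" and nz: "a \<noteq> 0" "b \<noteq> 0" "c \<noteq> 0" "q \<noteq> 0" "r \<noteq> 0" "s \<noteq> 0" "t \<noteq> 0"
  shows "theta (a * r * s * t / q\<^sup>2 * (r * s * t / q\<^sup>2) ^ j) p * theta (b * r * r ^ j) p
           * theta (c * s * s ^ j) p * theta (a * t / (b * c) * t ^ j) p
         - theta (q * q ^ j) p * theta (a * s * t / (b * q) * (s * t / q) ^ j) p
           * theta (a * r * t / (c * q) * (r * t / q) ^ j) p * theta (b * c * r * s / q * (r * s / q) ^ j) p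
         = q ^ Suc j * theta (a * (r * s * t / q) ^ Suc j) p * theta (b * r ^ Suc j / q ^ Suc j) p
           * theta (c * s ^ Suc j / q ^ Suc j) p * theta (a * t ^ Suc j / (b * c * q ^ Suc j)) p"
proof -
  define u B C Q where "u = a * (r * s * t) ^ Suc j" and "B = b * r ^ Suc j"
    and "C = c * s ^ Suc j" and "Q = q ^ Suc j"
  have "u \<noteq> 0" "B \<noteq> 0" "C \<noteq> 0" "Q \<noteq> 0"
    using nz by (auto simp: u_def B_def C_def Q_def)
  note shifted = theta_addition_shifted[OF p this]
  have qq: "(q\<^sup>2) ^ j = q ^ j * q ^ j"
    by (simp add: power_mult[symmetric] mult_2 power_add)
  have "u / Q\<^sup>2 = a * r * s * t / q\<^sup>2 * (r * s * t / q\<^sup>2) ^ j"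
    "u / (B * C) = a * t / (b * c) * t ^ j"
    "u / (B * Q) = a * s * t / (b * q) * (s * t / q) ^ j"
    "u / (C * Q) = a * r * t / (c * q) * (r * t / q) ^ j"
    "B * C / Q = b * c * r * s / q * (r * s / q) ^ j"
    "u / Q = a * (r * s * t / q) ^ Suc j"
    "B / Q = b * r ^ Suc j / q ^ Suc j"
    "C / Q = c * s ^ Suc j / q ^ Suc j"
    "u / (B * C * Q) = a * t ^ Suc j / (b * c * q ^ Suc j)"
    using nz unfolding u_def B_def C_def Q_def
    by (simp_all add: field_simps power_mult_distrib power_divide qq power2_eq_square)
  moreover have "B = b * r * r ^ j" "C = c * s * s ^ j" "Q = q * q ^ j"
    by (simp_all add: B_def C_def Q_def)
  ultimately show ?thesis
    using shifted by (simp only:) (simp add: Q_def mult_ac)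
qed

lemma mu_Suc:
  fixes a b c q r s t p :: complex
  assumes nonzero: "theta a p * theta b p * theta c p * theta (a / (b * c)) p \<noteq> 0"
  shows "mu a b c q r s t p (Suc j) =
    theta (a * (r * s * t / q) ^ Suc j) p * theta (b * r ^ Suc j / q ^ Suc j) p
      * theta (c * s ^ Suc j / q ^ Suc j) p * theta (a * t ^ Suc j / (b * c * q ^ Suc j)) p
      * Psi_num a b c q r s t p j / Psi_den a b c q r s t p (Suc j)"
proof -
  have "a * (r * s * t / q\<^sup>2) = a * r * s * t / q\<^sup>2" "a / (b * c) * t = a * t / (b * c)"
    by simp_all
  then show ?thesis
    using nonzero
    by (simp add: mu_def mu_num_def mu_den_def Psi_num_def Psi_den_def ellpoch_Suc_left mult_ac)
qed

lemma Psi_Suc: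
  fixes a b c q r s t p :: complex
  assumes p: "norm p < 1" and nz: "a \<noteq> 0" "b \<noteq> 0" "c \<noteq> 0" "q \<noteq> 0" "r \<noteq> 0" "s \<noteq> 0" "t \<noteq> 0"
    and den: "mu_den a b c q r s t p (Suc j) \<noteq> 0"
  shows "Psi a b c q r s t p (Suc j) = Psi a b c q r s t p j + mu a b c q r s t p (Suc j) * q ^ Suc j"
proof -
  define N where "N = theta (a * r * s * t / q\<^sup>2 * (r * s * t / q\<^sup>2) ^ j) p * theta (b * r * r ^ j) p
    * theta (c * s * s ^ j) p * theta (a * t / (b * c) * t ^ j) p"
  define D where "D = theta (q * q ^ j) p * theta (a * s * t / (b * q) * (s * t / q) ^ j) p
    * theta (a * r * t / (c * q) * (r * t / q) ^ j) p * theta (b * c * r * s / q * (r * s / q) ^ j) p"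
  have num_Suc: "Psi_num a b c q r s t p (Suc j) = Psi_num a b c q r s t p j * N"
    and den_Suc: "Psi_den a b c q r s t p (Suc j) = Psi_den a b c q r s t p j * D"
    by (simp_all add: N_def D_def Psi_num_def Psi_den_def ellpoch_Suc mult_ac)
  have "mu_den a b c q r s t p (Suc j)
      = theta a p * theta b p * theta c p * theta (a / (b * c)) p * Psi_den a b c q r s t p (Suc j)"
    by (simp add: mu_den_def Psi_den_def mult_ac)
  then have "theta a p * theta b p * theta c p * theta (a / (b * c)) p \<noteq> 0"
    and "Psi_den a b c q r s t p j \<noteq> 0" "D \<noteq> 0"
    using den den_Suc by auto
  moreover have "N - D = q ^ Suc j * theta (a * (r * s * t / q) ^ Suc j) p * theta (b * r ^ Suc j / q ^ Suc j) p
      * theta (c * s ^ Suc j / q ^ Suc j) p * theta (a * t ^ Suc j / (b * c * q ^ Suc j)) p"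
    unfolding N_def D_def by (rule theta_addition_telescoping[OF p nz])
  ultimately show ?thesis
    by (simp add: mu_Suc Psi_def num_Suc den_Suc field_simps)
qed

lemma sum_mu_eq_Psi:
  fixes a b c q r s t p :: complex
  assumes p: "norm p < 1" and nz: "a \<noteq> 0" "b \<noteq> 0" "c \<noteq> 0" "q \<noteq> 0" "r \<noteq> 0" "s \<noteq> 0" "t \<noteq> 0"
    and den: "\<And>k. k \<le> m \<Longrightarrow> mu_den a b c q r s t p k \<noteq> 0"
  shows "(\<Sum>k\<le>m. mu a b c q r s t p k * q ^ k) = Psi a b c q r s t p m"
  using den
proof (induction m)
  case 0
  then show ?case
    by (simp add: mu_def mu_num_def mu_den_def Psi_def Psi_num_def Psi_den_def)
next
  case (Suc m)
  then show ?case
    using Psi_Suc[OF p nz] by simp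
qed

lemma rho_eq_sum_mu_div_Psi:
  fixes a b c q r s t p :: complex
  assumes p: "norm p < 1" and nz: "a \<noteq> 0" "b \<noteq> 0" "c \<noteq> 0" "q \<noteq> 0" "r \<noteq> 0" "s \<noteq> 0" "t \<noteq> 0"
    and wd: "well_defined a b c q r s t p n" and k: "k \<le> n"
  shows "rho a b c q r s t p n k = (\<Sum>j\<le>n - k. mu a b c q r s t p j * q ^ j) / Psi a b c q r s t p n"
proof -
  have "(\<Sum>j\<le>n - k. mu a b c q r s t p j * q ^ j) = Psi a b c q r s t p (n - k)"
    using wd by (intro sum_mu_eq_Psi[OF p nz]) (simp add: well_defined_def)
  also have "\<dots> = Psi a b c q r s t p n * rho a b c q r s t p n k"
    using wd k by (intro Psi_mult_rho[OF p nz, symmetric]) (auto simp: well_defined_def)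
  finally show ?thesis
    using Psi_nonzero[OF p nz wd] by simp
qed

lemma sum_mult_partial_sums_commute:
  fixes x y :: "nat \<Rightarrow> 'a :: comm_semiring_0"
  shows "(\<Sum>k\<le>n. x k * (\<Sum>j\<le>n - k. y j)) = (\<Sum>k\<le>n. y k * (\<Sum>j\<le>n - k. x j))"
proof -
  have triangle: "(\<Sum>k\<le>n. \<Sum>j\<le>n - k. f k j) = (\<Sum>(k, j)\<in>{(k, j). k + j \<le> n}. f k j)"
    for f :: "nat \<Rightarrow> nat \<Rightarrow> 'a"
  proof -
    have "Sigma {..n} (\<lambda>k. {..n - k}) = {(k, j). k + j \<le> n}"
      by auto
    then show ?thesis
      by (simp add: sum.Sigma)
  qed
  have "(\<Sum>(k, j)\<in>{(k, j). k + j \<le> n}. x k * y j) = (\<Sum>(k, j)\<in>{(k, j). k + j \<le> n}. y k * x j)"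
    by (rule sum.reindex_bij_witness[where i = prod.swap and j = prod.swap]) (auto simp: mult.commute)
  then show ?thesis
    by (simp add: sum_distrib_left triangle)
qed

theorem mainTheorem13:
  fixes a b c q r s t p A B C Q R S T P :: complex and n :: nat
  assumes "norm p < 1" and "norm P < 1"
    and "a \<noteq> 0" "b \<noteq> 0" "c \<noteq> 0" "q \<noteq> 0" "r \<noteq> 0" "s \<noteq> 0" "t \<noteq> 0"
    and "A \<noteq> 0" "B \<noteq> 0" "C \<noteq> 0" "Q \<noteq> 0" "R \<noteq> 0" "S \<noteq> 0" "T \<noteq> 0"
    and "well_defined a b c q r s t p n"
    and "well_defined A B C Q R S T P n"
    and "Psi_num A B C Q R S T P n \<noteq> 0"
  shows "(\<Sum>k=0..n. mu a b c q r s t p k * rho A B C Q R S T P n k * q ^ k)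
       = Psi a b c q r s t p n / Psi A B C Q R S T P n
         * (\<Sum>k=0..n. mu A B C Q R S T P k * rho a b c q r s t p n k * Q ^ k)"
proof -
  define x where "x k = mu a b c q r s t p k * q ^ k" for k
  define y where "y k = mu A B C Q R S T P k * Q ^ k" for k
  note rho_x = rho_eq_sum_mu_div_Psi[OF assms(1,3-9,17), folded x_def]
  note rho_y = rho_eq_sum_mu_div_Psi[OF assms(2,10-16,18), folded y_def]
  have "(\<Sum>k=0..n. mu a b c q r s t p k * rho A B C Q R S T P n k * q ^ k)
      = (\<Sum>k\<le>n. x k * (\<Sum>j\<le>n - k. y j) / Psi A B C Q R S T P n)"
    by (intro sum.cong) (auto simp: rho_y x_def)
  moreover have "(\<Sum>k=0..n. mu A B C Q R S T P k * rho a b c q r s t p n k * Q ^ k)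
      = (\<Sum>k\<le>n. y k * (\<Sum>j\<le>n - k. x j) / Psi a b c q r s t p n)"
    by (intro sum.cong) (auto simp: rho_x y_def)
  ultimately show ?thesis
    using Psi_nonzero[OF assms(1,3-9,17)] sum_mult_partial_sums_commute[of x y n]
    by (simp add: sum_divide_distrib[symmetric])
qed

end
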